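(* Let $M$ be a loopless binary matroid on an $n$-element ground set $S$, of rank $r$. 1. If $S$ is colored with exactly $r$ colors (every color being used) and $M$ has no rainbow colored circuit, then one of the color classes is a cut of $M$. 2. If $S$ is colored with exactly $n-r$ colors (every color being used) and $M$ has no rainbow colored cut, then one of the color classes is a circuit of $M$.
   Context: A coloring of $S$ is a partition of $S$ into nonempty color classes. A subset is rainbow colored if no two of its elements have the same color. A cut of a matroid is an inclusionwise minimal subset of the ground set intersecting every basis (equivalently, a circuit of the dual matroid). A matroid is binary if it is representable over $GF(2)$. *)

theory Defs
  imports Main "HOL-Library.Z2" "HOL-Library.Disjoint_Sets"
begin

definition matroid :: "'a set \<Rightarrow> ('a set \<Rightarrow> bool) \<Rightarrow> bool" where
  "matroid S indep \<longleftrightarrow> finite S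
     \<and> (\<forall>X. indep X \<longrightarrow> X \<subseteq> S)
     \<and> indep {}
     \<and> (\<forall>X Y. indep X \<and> Y \<subseteq> X \<longrightarrow> indep Y)
     \<and> (\<forall>X Y. indep X \<and> indep Y \<and> card X < card Y \<longrightarrow>
            (\<exists>y\<in>Y - X. indep (insert y X)))"

definition gf2_lin_indep :: "('a \<Rightarrow> nat \<Rightarrow> bit) \<Rightarrow> 'a set \<Rightarrow> bool" where
  "gf2_lin_indep v X \<longleftrightarrow>
     (\<forall>a :: 'a \<Rightarrow> bit. (\<forall>i. (\<Sum>x\<in>X. a x * v x i) = 0) \<longrightarrow> (\<forall>x\<in>X. a x = 0))"

definition binary_matroid :: "'a set \<Rightarrow> ('a set \<Rightarrow> bool) \<Rightarrow> bool" where
  "binary_matroid S indep \<longleftrightarrow> matroid S indep \<and>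
     (\<exists>v :: 'a \<Rightarrow> nat \<Rightarrow> bit. \<forall>X. X \<subseteq> S \<longrightarrow> (indep X \<longleftrightarrow> gf2_lin_indep v X))"

definition basis :: "'a set \<Rightarrow> ('a set \<Rightarrow> bool) \<Rightarrow> 'a set \<Rightarrow> bool" where
  "basis S indep B \<longleftrightarrow> indep B \<and> (\<forall>X. indep X \<and> B \<subseteq> X \<longrightarrow> X = B)"

definition matroid_rank :: "'a set \<Rightarrow> ('a set \<Rightarrow> bool) \<Rightarrow> nat" where
  "matroid_rank S indep = Max (card ` {X. indep X})"

definition circuit :: "'a set \<Rightarrow> ('a set \<Rightarrow> bool) \<Rightarrow> 'a set \<Rightarrow> bool" where
  "circuit S indep C \<longleftrightarrow> C \<subseteq> S \<and> \<not> indep C \<and> (\<forall>D. D \<subset> C \<longrightarrow> indep D)"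

definition cut :: "'a set \<Rightarrow> ('a set \<Rightarrow> bool) \<Rightarrow> 'a set \<Rightarrow> bool" where
  "cut S indep K \<longleftrightarrow> K \<subseteq> S \<and> (\<forall>B. basis S indep B \<longrightarrow> K \<inter> B \<noteq> {})
     \<and> (\<forall>K'. K' \<subset> K \<longrightarrow> (\<exists>B. basis S indep B \<and> K' \<inter> B = {}))"

definition loopless :: "'a set \<Rightarrow> ('a set \<Rightarrow> bool) \<Rightarrow> bool" where
  "loopless S indep \<longleftrightarrow> (\<forall>x\<in>S. indep {x})"

text \<open>A coloring is a partition of S into nonempty color classes;
  a set is rainbow if it meets each color class in at most one element.\<close>
definition rainbow :: "'a set set \<Rightarrow> 'a set \<Rightarrow> bool" where
  "rainbow P X \<longleftrightarrow> (\<forall>A\<in>P. card (X \<inter> A) \<le> 1)"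

end

theory Submission
  imports Defs
begin

(* Fix a GF(2) representation and one element t A of every colour class A.  In part 1 the
   rainbow set T = t ` P is independent of size r, hence a basis; in part 2 it avoids some basis,
   which by counting must be S - T.  Give every element x the vector c x over GF(2), indexed by
   the classes, with c x k = 1 iff x lies in the fundamental cocircuit (part 1) resp. fundamental
   circuit (part 2) of t k with respect to that basis.  Then c (t A) is the unit vector of A, and
   the hypothesis says that, whenever one element is chosen from each class, no nonempty
   subfamily of the chosen vectors sums to zero: in part 1 the sum is the coordinate vector of a
   rainbow set, in part 2 a zero sum would make a rainbow set meet all fundamental circuits
   evenly, hence be a cocycle meeting every basis.  An induction on the number of classes gives
   a class i owning a private coordinate, c x i = 1 exactly for x in i, so that i is itself the
   fundamental cocircuit resp. circuit of t i. *)

section \<open>Transversals with independent sums\<close>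

(* Keep GF(2) sums in ring form instead of letting the simplifier turn them into xor. *)
declare add_bit_eq_xor [simp del] mult_bit_eq_and [simp del]

lemma of_bool_eq_1_bit [simp]: "of_bool (x = 1) = (x::bit)"
  by (cases x) simp_all

lemma bit_add_eq_0_iff: "(x::bit) + y = 0 \<longleftrightarrow> x = y"
  by (cases x; cases y) simp_all

definition transversals_independent :: "'e set set \<Rightarrow> ('e \<Rightarrow> 'e set \<Rightarrow> bit) \<Rightarrow> bool" where
  "transversals_independent P c \<longleftrightarrow> (\<forall>y. (\<forall>A\<in>P. y A \<in> A) \<longrightarrow>
      (\<forall>J. J \<subseteq> P \<and> J \<noteq> {} \<longrightarrow> (\<exists>k\<in>P. (\<Sum>A\<in>J. c (y A) k) \<noteq> 0)))"

definition private_coordinate :: "'e set set \<Rightarrow> ('e \<Rightarrow> 'e set \<Rightarrow> bit) \<Rightarrow> 'e set \<Rightarrow> bool" where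
  "private_coordinate P c i \<longleftrightarrow> i \<in> P \<and> (\<forall>A\<in>P - {i}. \<forall>x\<in>A. c x i = 0)"

lemma transversals_independentD:
  "transversals_independent P c \<Longrightarrow> \<forall>A\<in>P. y A \<in> A \<Longrightarrow> J \<subseteq> P \<Longrightarrow> J \<noteq> {}
   \<Longrightarrow> \<exists>k\<in>P. (\<Sum>A\<in>J. c (y A) k) \<noteq> 0"
  unfolding transversals_independent_def by blast

locale unit_transversal =
  fixes P :: "'e set set" and c :: "'e \<Rightarrow> 'e set \<Rightarrow> bit" and t :: "'e set \<Rightarrow> 'e"
  assumes finite: "finite P"
    and t_in: "\<And>A. A \<in> P \<Longrightarrow> t A \<in> A"
    and c_t: "\<And>A k. A \<in> P \<Longrightarrow> k \<in> P \<Longrightarrow> c (t A) k = (if k = A then 1 else 0)"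
    and independent: "transversals_independent P c"
begin

lemma diagonal:
  assumes A: "A \<in> P" and x: "x \<in> A"
  shows "c x A = 1"
proof (rule ccontr)
  assume "c x A \<noteq> 1"
  hence cx: "c x A = 0" by simp
  \<comment> \<open>Choosing x instead of t A, the sum over A and the classes B with c x B = 1 cancels.\<close>
  define y where "y = t(A := x)"
  define J where "J = insert A {B \<in> P - {A}. c x B = 1}"
  have "\<forall>B\<in>P. y B \<in> B" using t_in x by (simp add: y_def)
  moreover have J: "J \<subseteq> P" "J \<noteq> {}" using A by (auto simp: J_def)
  ultimately obtain k where k: "k \<in> P" "(\<Sum>B\<in>J. c (y B) k) \<noteq> 0"
    using transversals_independentD[OF independent] by blast
  have fJ: "finite J" using J finite finite_subset by blast
  have "(\<Sum>B\<in>J. c (y B) k) = c x k + (\<Sum>B\<in>J - {A}. c (t B) k)"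
    using fJ by (simp add: J_def sum.remove y_def)
  also have "(\<Sum>B\<in>J - {A}. c (t B) k) = (\<Sum>B\<in>J - {A}. if k = B then 1 else 0)"
    using J k(1) by (intro sum.cong refl) (simp add: c_t subset_iff)
  also have "\<dots> = (if k \<in> J - {A} then 1 else 0)"
    using fJ by (simp add: sum.delta')
  finally show False using k cx by (cases "k = A"; cases "c x k") (simp_all add: J_def)
qed

lemma remove_class:
  assumes m: "m \<in> P"
  shows "unit_transversal (P - {m}) c t"
proof
  show "transversals_independent (P - {m}) c"
    unfolding transversals_independent_def
  proof (intro allI impI)
    fix y J assume y: "\<forall>A\<in>P - {m}. y A \<in> A" and J: "J \<subseteq> P - {m} \<and> J \<noteq> {}"
    show "\<exists>k\<in>P - {m}. (\<Sum>A\<in>J. c (y A) k) \<noteq> 0"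
    proof (rule ccontr)
      assume zero: "\<not> ?thesis"
      \<comment> \<open>Extended by t m, the sum over J can be nonzero only at m, where adding t m cancels it.\<close>
      define y' where "y' = y(m := t m)"
      have y': "\<forall>A\<in>P. y' A \<in> A" using y t_in by (simp add: y'_def)
      have fJ: "finite J" using J finite finite_subset by blast
      have sum_y': "(\<Sum>A\<in>J. c (y' A) k) = (\<Sum>A\<in>J. c (y A) k)" for k
        using J by (intro sum.cong) (auto simp: y'_def)
      obtain k where k: "k \<in> P" "(\<Sum>A\<in>J. c (y' A) k) \<noteq> 0"
        using transversals_independentD[OF independent y'] J by blast
      with zero sum_y' have "k = m" by (metis DiffI singletonD)
      with k sum_y' have sum_m: "(\<Sum>A\<in>J. c (y A) m) = 1" by simp
      have "insert m J \<subseteq> P" using J m by auto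
      then obtain k' where k': "k' \<in> P" "(\<Sum>A\<in>insert m J. c (y' A) k') \<noteq> 0"
        using transversals_independentD[OF independent y'] by blast
      have "m \<notin> J" using J by auto
      hence "(\<Sum>A\<in>insert m J. c (y' A) k') = (if k' = m then 1 else 0) + (\<Sum>A\<in>J. c (y A) k')"
        using fJ sum_y' k'(1) m by (simp add: y'_def c_t)
      with k' sum_m zero show False by (cases "k' = m") auto
    qed
  qed
qed (use finite t_in c_t in auto)

lemma restriction_coordinates_permute:
  assumes none: "\<nexists>i. private_coordinate P c i"
    and s: "\<And>m. m \<in> P \<Longrightarrow> private_coordinate (P - {m}) c (s m)"
  shows "\<And>m. m \<in> P \<Longrightarrow> \<exists>x\<in>m. c x (s m) = 1" and "s ` P = P"
proof -
  \<comment> \<open>As s m is not private for P, its support must meet the class m.\<close>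
  show hit: "\<exists>x\<in>m. c x (s m) = 1" if m: "m \<in> P" for m
  proof -
    have "s m \<in> P" using s[OF m] by (simp add: private_coordinate_def)
    with none obtain A x where "A \<in> P - {s m}" "x \<in> A" "c x (s m) \<noteq> 0"
      unfolding private_coordinate_def by blast
    moreover from calculation s[OF m] have "A = m" unfolding private_coordinate_def by blast
    ultimately show ?thesis by auto
  qed
  have "inj_on s P"
  proof (rule inj_onI)
    fix m m' assume mm: "m \<in> P" "m' \<in> P" "s m = s m'"
    obtain x where x: "x \<in> m" "c x (s m) = 1" using hit[OF mm(1)] by blast
    show "m = m'"
    proof (rule ccontr)
      assume "m \<noteq> m'"
      hence "m \<in> P - {m'} - {s m'}" using mm s[OF mm(1)] by (auto simp: private_coordinate_def)
      with s[OF mm(2)] x mm(3) show False by (auto simp: private_coordinate_def)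
    qed
  qed
  then show "s ` P = P"
    using s by (intro endo_inj_surj[OF finite]) (auto simp: private_coordinate_def)
qed

lemma private_coordinate_from_restrictions:
  assumes "P \<noteq> {}" and restr: "\<forall>m\<in>P. \<exists>s. private_coordinate (P - {m}) c s"
  shows "\<exists>i. private_coordinate P c i"
proof (rule ccontr)
  assume none: "\<not> ?thesis"
  obtain s where s: "\<And>m. m \<in> P \<Longrightarrow> private_coordinate (P - {m}) c (s m)"
    using restr by metis
  note permute = restriction_coordinates_permute[OF none s]
  obtain y where y: "\<And>m. m \<in> P \<Longrightarrow> y m \<in> m \<and> c (y m) (s m) = 1"
    using permute(1) by metis
  obtain k where k: "k \<in> P" "(\<Sum>A\<in>P. c (y A) k) \<noteq> 0"
    using transversals_independentD[OF independent, of y P] y \<open>P \<noteq> {}\<close> by blast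
  from k permute(2) obtain m where m: "m \<in> P" "k = s m" by blast
  have km: "k \<noteq> m" using s[OF m(1)] m(2) by (simp add: private_coordinate_def)
  \<comment> \<open>In coordinate k = s m only y k and y m contribute, each a one.\<close>
  have "(\<Sum>A\<in>P. c (y A) k) = c (y k) k + (\<Sum>A\<in>P - {k}. c (y A) k)"
    using k finite by (intro sum.remove)
  also have "(\<Sum>A\<in>P - {k}. c (y A) k) = c (y m) k + (\<Sum>A\<in>P - {k} - {m}. c (y A) k)"
    using m km finite by (intro sum.remove) auto
  also have "(\<Sum>A\<in>P - {k} - {m}. c (y A) k) = 0"
    using s[OF m(1)] y m(2) by (intro sum.neutral) (auto simp: private_coordinate_def)
  finally show False using k m y diagonal by simp
qed

lemma private_coordinate_class:
  assumes i: "private_coordinate P c i" and x: "x \<in> \<Union>P"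
  shows "c x i = 1 \<longleftrightarrow> x \<in> i"
proof
  assume "c x i = 1"
  moreover obtain A where "A \<in> P" "x \<in> A" using x by blast
  ultimately show "x \<in> i" using i by (cases "A = i") (auto simp: private_coordinate_def)
next
  assume "x \<in> i"
  with i show "c x i = 1" by (auto simp: private_coordinate_def intro: diagonal)
qed

end

lemma private_coordinate_exists:
  assumes "unit_transversal P c t" and "P \<noteq> {}"
  shows "\<exists>i. private_coordinate P c i"
  using assms
proof (induction "card P" arbitrary: P rule: less_induct)
  case less
  interpret unit_transversal P c t by fact
  show ?case
  proof (cases "\<exists>i. P = {i}")
    case True
    thus ?thesis by (auto simp: private_coordinate_def)
  next
    case False
    have "\<exists>s. private_coordinate (P - {m}) c s" if m: "m \<in> P" for m
    proof (rule less.hyps)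
      show "card (P - {m}) < card P" using finite m by (rule card_Diff1_less)
      show "P - {m} \<noteq> {}" using False m by blast
    qed (rule remove_class[OF m])
    with private_coordinate_from_restrictions[OF less.prems(2)] show ?thesis by blast
  qed
qed

lemma private_class_exists:
  assumes "unit_transversal P c t" and "P \<noteq> {}"
  shows "\<exists>i\<in>P. \<forall>x\<in>\<Union>P. c x i = 1 \<longleftrightarrow> x \<in> i"
proof -
  interpret unit_transversal P c t by fact
  obtain i where "private_coordinate P c i" using private_coordinate_exists assms by blast
  with private_coordinate_class show ?thesis by (auto simp: private_coordinate_def)
qed

section \<open>Matroids and rainbow sets\<close>

lemma finite_minimal_subset:
  assumes "finite X" and "Q X"
  obtains Y where "Y \<subseteq> X" "Q Y" "\<And>Z. Z \<subset> Y \<Longrightarrow> \<not> Q Z"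
proof -
  have "finite {Y. Y \<subseteq> X \<and> Q Y}" using assms(1) by simp
  then obtain Y where "Y \<in> {Y. Y \<subseteq> X \<and> Q Y}"
      "\<forall>Z \<in> {Y. Y \<subseteq> X \<and> Q Y}. Z \<subseteq> Y \<longrightarrow> Y = Z"
    using finite_has_minimal2[of "{Y. Y \<subseteq> X \<and> Q Y}" X] assms by blast
  with that show thesis by blast
qed

lemma partition_on_class_unique:
  "partition_on S P \<Longrightarrow> A \<in> P \<Longrightarrow> B \<in> P \<Longrightarrow> x \<in> A \<Longrightarrow> x \<in> B \<Longrightarrow> A = B"
  unfolding partition_on_def disjoint_def by blast

lemma partition_on_transversal_inj:
  "partition_on S P \<Longrightarrow> J \<subseteq> P \<Longrightarrow> \<forall>A\<in>J. y A \<in> A \<Longrightarrow> inj_on y J"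
  by (rule inj_onI) (metis partition_on_class_unique subsetD)

lemma partition_on_transversal_rainbow:
  assumes P: "partition_on S P" and J: "J \<subseteq> P" and y: "\<forall>A\<in>J. y A \<in> A"
  shows "rainbow P (y ` J)"
  unfolding rainbow_def
proof
  fix A assume A: "A \<in> P"
  have "y ` J \<inter> A \<subseteq> {y A}"
    using partition_on_class_unique[OF P] A J y by blast
  thus "card (y ` J \<inter> A) \<le> 1"
    using card_mono[of "{y A}"] by fastforce
qed

lemma rainbow_subset: "rainbow P X \<Longrightarrow> Y \<subseteq> X \<Longrightarrow> finite X \<Longrightarrow> rainbow P Y"
proof -
  assume "rainbow P X" "Y \<subseteq> X" "finite X"
  hence "card (Y \<inter> A) \<le> card (X \<inter> A)" for A by (intro card_mono) auto
  with \<open>rainbow P X\<close> show "rainbow P Y" unfolding rainbow_def using le_trans by blast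
qed

lemma partition_on_transversal:
  assumes P: "partition_on S P"
  obtains t where "\<And>A. A \<in> P \<Longrightarrow> t A \<in> A" "inj_on t P" "t ` P \<subseteq> S" "rainbow P (t ` P)"
proof -
  have "\<forall>A\<in>P. \<exists>x. x \<in> A" using partition_onD3[OF P] by (metis ex_in_conv)
  then obtain t where t: "\<forall>A\<in>P. t A \<in> A" by metis
  moreover have "t ` P \<subseteq> S" using t partition_onD1[OF P] by blast
  ultimately show thesis
    using that partition_on_transversal_inj[OF P order_refl t] partition_on_transversal_rainbow[OF P order_refl t]
    by blast
qed

context
  fixes S :: "'a set" and indep :: "'a set \<Rightarrow> bool"
  assumes matroid: "matroid S indep"
begin

lemma indep_subset_ground: "indep X \<Longrightarrow> X \<subseteq> S"
  using matroid by (simp add: matroid_def)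

lemma indep_subset: "indep X \<Longrightarrow> Y \<subseteq> X \<Longrightarrow> indep Y"
  using matroid by (simp add: matroid_def)

lemma finite_ground: "finite S"
  using matroid by (simp add: matroid_def)

lemma indep_card_le_rank: "indep X \<Longrightarrow> card X \<le> matroid_rank S indep"
proof -
  have "finite {X. indep X}"
    using indep_subset_ground finite_ground by (blast intro: finite_subset[of _ "Pow S"])
  thus "indep X \<Longrightarrow> card X \<le> matroid_rank S indep"
    unfolding matroid_rank_def by (auto intro: Max_ge)
qed

lemma indep_augment:
  "indep X \<Longrightarrow> indep Y \<Longrightarrow> card X < card Y \<Longrightarrow> \<exists>y\<in>Y - X. indep (insert y X)"
  using matroid unfolding matroid_def by blast

lemma rank_attained: "\<exists>X. indep X \<and> card X = matroid_rank S indep"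
proof -
  have "finite {X. indep X}"
    using indep_subset_ground finite_ground by (blast intro: finite_subset[of _ "Pow S"])
  moreover have "indep {}" using matroid by (simp add: matroid_def)
  ultimately have "matroid_rank S indep \<in> card ` {X. indep X}"
    unfolding matroid_rank_def by (intro Max_in) auto
  thus ?thesis by auto
qed

lemma rank_le_card_ground: "matroid_rank S indep \<le> card S"
proof -
  obtain X where "indep X" "card X = matroid_rank S indep" using rank_attained by blast
  hence "X \<subseteq> S" by (simp add: indep_subset_ground)
  with \<open>card X = _\<close> show ?thesis using card_mono[OF finite_ground] by metis
qed

lemma basis_iff_card: "basis S indep B \<longleftrightarrow> indep B \<and> card B = matroid_rank S indep"
proof
  assume B: "basis S indep B"
  hence "indep B" by (simp add: basis_def)
  moreover have "\<not> card B < matroid_rank S indep"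
  proof
    assume "card B < matroid_rank S indep"
    moreover obtain X where "indep X" "card X = matroid_rank S indep"
      using rank_attained by blast
    ultimately obtain x where "x \<in> X - B" "indep (insert x B)"
      using indep_augment[OF \<open>indep B\<close>, of X] by auto
    with B show False unfolding basis_def by blast
  qed
  ultimately show "indep B \<and> card B = matroid_rank S indep"
    using indep_card_le_rank by (simp add: not_less le_antisym)
next
  assume B: "indep B \<and> card B = matroid_rank S indep"
  have "X = B" if "indep X" "B \<subseteq> X" for X
  proof (rule card_seteq[symmetric])
    show "finite X" using finite_subset[OF indep_subset_ground[OF that(1)] finite_ground] .
    show "card X \<le> card B" using indep_card_le_rank[OF that(1)] B by simp
  qed (fact that(2))
  with B show "basis S indep B" by (simp add: basis_def)
qed

lemma basis_insert_dependent: "basis S indep B \<Longrightarrow> x \<notin> B \<Longrightarrow> \<not> indep (insert x B)"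
  unfolding basis_def by blast

lemma basis_disjoint_eq_complement:
  assumes B: "basis S indep B" and "B \<inter> T = {}" and "T \<subseteq> S"
    and card_T: "card T = card S - matroid_rank S indep"
  shows "B = S - T"
proof (rule card_subset_eq)
  show "finite (S - T)" using finite_ground by simp
  show "B \<subseteq> S - T" using B \<open>B \<inter> T = {}\<close> indep_subset_ground by (auto simp: basis_def)
  show "card B = card (S - T)"
    using B basis_iff_card card_T \<open>T \<subseteq> S\<close> rank_le_card_ground finite_ground
    by (simp add: card_Diff_subset finite_subset)
qed

lemma dependent_contains_circuit:
  assumes "X \<subseteq> S" and "\<not> indep X"
  obtains C where "C \<subseteq> X" "circuit S indep C"
proof -
  have "finite X" using assms(1) finite_ground by (rule finite_subset)
  then obtain C where "C \<subseteq> X" "\<not> indep C" "\<And>Z. Z \<subset> C \<Longrightarrow> indep Z"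
    using assms(2) by (rule finite_minimal_subset) blast
  with assms(1) that show thesis unfolding circuit_def by blast
qed

lemma meets_all_bases_contains_cut:
  assumes "X \<subseteq> S" and "\<forall>B. basis S indep B \<longrightarrow> X \<inter> B \<noteq> {}"
  obtains K where "K \<subseteq> X" "cut S indep K"
proof -
  have "finite X" using assms(1) finite_ground by (rule finite_subset)
  then obtain K where K: "K \<subseteq> X" "\<forall>B. basis S indep B \<longrightarrow> K \<inter> B \<noteq> {}"
      "\<And>Z. Z \<subset> K \<Longrightarrow> \<not> (\<forall>B. basis S indep B \<longrightarrow> Z \<inter> B \<noteq> {})"
    using assms(2) by (rule finite_minimal_subset) blast
  have "cut S indep K"
    unfolding cut_def using K assms(1) by simp
  with K(1) show thesis by (rule that)
qed

lemma circuitI: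
  assumes "C \<subseteq> S" and "\<not> indep C" and "\<And>x. x \<in> C \<Longrightarrow> indep (C - {x})"
  shows "circuit S indep C"
  unfolding circuit_def
proof (intro conjI allI impI assms(1,2))
  fix D assume "D \<subset> C"
  then obtain x where x: "x \<in> C" "D \<subseteq> C - {x}" by blast
  show "indep D" using indep_subset[OF assms(3)[OF x(1)] x(2)] .
qed

lemma cutI:
  assumes "K \<subseteq> S" and "\<forall>B. basis S indep B \<longrightarrow> K \<inter> B \<noteq> {}"
    and "\<And>x. x \<in> K \<Longrightarrow> \<exists>B. basis S indep B \<and> (K - {x}) \<inter> B = {}"
  shows "cut S indep K"
  unfolding cut_def
proof (intro conjI assms(1,2) allI impI)
  fix K' assume "K' \<subset> K"
  then obtain x where x: "x \<in> K" "K' \<subseteq> K - {x}" by blast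
  then obtain B where "basis S indep B" "(K - {x}) \<inter> B = {}" using assms(3) by blast
  with x(2) show "\<exists>B. basis S indep B \<and> K' \<inter> B = {}" by blast
qed

lemma rainbow_indep_if_no_rainbow_circuit:
  assumes "\<not> (\<exists>C. circuit S indep C \<and> rainbow P C)" and "Y \<subseteq> S" and "rainbow P Y"
  shows "indep Y"
proof (rule ccontr)
  assume "\<not> indep Y"
  then obtain C where C: "C \<subseteq> Y" "circuit S indep C"
    using dependent_contains_circuit[OF \<open>Y \<subseteq> S\<close>] by blast
  have "finite Y" using assms(2) finite_ground by (rule finite_subset)
  with C assms(1) rainbow_subset[OF assms(3) C(1)] show False by blast
qed

lemma rainbow_avoids_basis_if_no_rainbow_cut:
  assumes "\<not> (\<exists>K. cut S indep K \<and> rainbow P K)" and "Y \<subseteq> S" and "rainbow P Y"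
  shows "\<exists>B. basis S indep B \<and> B \<inter> Y = {}"
proof (rule ccontr)
  assume "\<not> ?thesis"
  hence "\<forall>B. basis S indep B \<longrightarrow> Y \<inter> B \<noteq> {}" by (auto simp: Int_commute)
  then obtain K where K: "K \<subseteq> Y" "cut S indep K"
    using meets_all_bases_contains_cut[OF \<open>Y \<subseteq> S\<close>] by blast
  have "finite Y" using assms(2) finite_ground by (rule finite_subset)
  with K assms(1) rainbow_subset[OF assms(3) K(1)] show False by blast
qed

end

section \<open>Binary matroids\<close>

lemma gf2_lin_indep_insert_combination:
  assumes indep: "gf2_lin_indep v B" and fin: "finite B" and x: "x \<notin> B"
    and dep: "\<not> gf2_lin_indep v (insert x B)"
  shows "\<exists>a. \<forall>i. v x i = (\<Sum>b\<in>B. a b * v b i)"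
proof -
  from dep obtain a where a: "\<forall>i. (\<Sum>y\<in>insert x B. a y * v y i) = 0" "\<exists>y\<in>insert x B. a y \<noteq> 0"
    unfolding gf2_lin_indep_def by blast
  have split: "(\<Sum>y\<in>insert x B. a y * v y i) = a x * v x i + (\<Sum>y\<in>B. a y * v y i)" for i
    using fin x by simp
  have "a x = 1"
  proof (rule ccontr)
    assume "a x \<noteq> 1"
    hence "a x = 0" by simp
    with a(1) split have "\<forall>i. (\<Sum>y\<in>B. a y * v y i) = 0" by simp
    with indep have "\<forall>y\<in>B. a y = 0" unfolding gf2_lin_indep_def by blast
    with a(2) \<open>a x = 0\<close> show False by auto
  qed
  with a(1) split show ?thesis by (auto simp: bit_add_eq_0_iff)
qed

text \<open>g is the restriction to X of a linear functional on the span of the vectors v x.\<close>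
definition gf2_functional :: "('a \<Rightarrow> 'i \<Rightarrow> bit) \<Rightarrow> 'a set \<Rightarrow> ('a \<Rightarrow> bit) \<Rightarrow> bool" where
  "gf2_functional v X g \<longleftrightarrow>
     (\<forall>Z l. Z \<subseteq> X \<longrightarrow> (\<forall>i. (\<Sum>z\<in>Z. l z * v z i) = 0) \<longrightarrow> (\<Sum>z\<in>Z. l z * g z) = 0)"

lemma gf2_functionalD:
  "gf2_functional v X g \<Longrightarrow> Z \<subseteq> X \<Longrightarrow> (\<And>i. (\<Sum>z\<in>Z. l z * v z i) = 0) \<Longrightarrow> (\<Sum>z\<in>Z. l z * g z) = 0"
  unfolding gf2_functional_def by blast

lemma gf2_functional_sum:
  assumes "\<And>w. w \<in> W \<Longrightarrow> gf2_functional v X (g w)"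
  shows "gf2_functional v X (\<lambda>x. \<Sum>w\<in>W. g w x)"
  unfolding gf2_functional_def
proof (intro allI impI)
  fix Z l assume "Z \<subseteq> X" and rel: "\<forall>i. (\<Sum>z\<in>Z. l z * v z i) = 0"
  have "(\<Sum>z\<in>Z. l z * (\<Sum>w\<in>W. g w z)) = (\<Sum>w\<in>W. \<Sum>z\<in>Z. l z * g w z)"
    by (simp add: sum_distrib_left sum.swap[of _ W])
  also have "\<dots> = 0"
    using gf2_functionalD[OF assms \<open>Z \<subseteq> X\<close>] rel by simp
  finally show "(\<Sum>z\<in>Z. l z * (\<Sum>w\<in>W. g w z)) = 0" .
qed

locale gf2_represented_matroid =
  fixes S :: "'a set" and indep :: "'a set \<Rightarrow> bool" and v :: "'a \<Rightarrow> nat \<Rightarrow> bit"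
  assumes matroid: "matroid S indep"
    and indep_iff: "\<And>X. X \<subseteq> S \<Longrightarrow> indep X \<longleftrightarrow> gf2_lin_indep v X"
begin

lemma indep_gf2_lin_indep: "indep X \<Longrightarrow> gf2_lin_indep v X"
  using indep_iff indep_subset_ground[OF matroid] by blast

lemma finite_basis: "basis S indep B \<Longrightarrow> finite B"
  unfolding basis_def using indep_subset_ground[OF matroid] finite_ground[OF matroid]
  by (blast intro: finite_subset)

text \<open>For x outside the span of B the coordinates are junk.\<close>
definition coord :: "'a set \<Rightarrow> 'a \<Rightarrow> 'a \<Rightarrow> bit" where
  "coord B x = (if x \<in> B then (\<lambda>b. if b = x then 1 else 0)
                else (SOME a. \<forall>i. v x i = (\<Sum>b\<in>B. a b * v b i)))"

lemma coord_basis_elem [simp]: "x \<in> B \<Longrightarrow> coord B x b = (if b = x then 1 else 0)"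
  by (simp add: coord_def)

lemma coord_repr:
  assumes B: "basis S indep B" and x: "x \<in> S"
  shows "v x i = (\<Sum>b\<in>B. coord B x b * v b i)"
proof (cases "x \<in> B")
  case True
  have "(\<Sum>b\<in>B. coord B x b * v b i) = (\<Sum>b\<in>B. if b = x then v b i else 0)"
    using True by (intro sum.cong) auto
  with True finite_basis[OF B] show ?thesis by simp
next
  case False
  have "indep B" using B by (simp add: basis_def)
  hence "insert x B \<subseteq> S" using x indep_subset_ground[OF matroid] by blast
  hence "\<not> gf2_lin_indep v (insert x B)"
    using basis_insert_dependent[OF matroid B False] by (simp add: indep_iff)
  hence ex: "\<exists>a. \<forall>i. v x i = (\<Sum>b\<in>B. a b * v b i)"
    using gf2_lin_indep_insert_combination[OF indep_gf2_lin_indep[OF \<open>indep B\<close>] finite_basis[OF B] False]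
    by blast
  have coord_x: "coord B x = (SOME a. \<forall>i. v x i = (\<Sum>b\<in>B. a b * v b i))"
    using False by (simp add: coord_def)
  have "\<forall>i. v x i = (\<Sum>b\<in>B. coord B x b * v b i)"
    unfolding coord_x by (rule someI_ex[OF ex])
  thus ?thesis ..
qed

lemma sum_in_coord:
  assumes B: "basis S indep B" and Z: "Z \<subseteq> S"
  shows "(\<Sum>z\<in>Z. l z * v z i) = (\<Sum>b\<in>B. (\<Sum>z\<in>Z. l z * coord B z b) * v b i)"
proof -
  have "(\<Sum>z\<in>Z. l z * v z i) = (\<Sum>z\<in>Z. l z * (\<Sum>b\<in>B. coord B z b * v b i))"
  proof (intro sum.cong refl)
    fix z assume "z \<in> Z"
    with Z coord_repr[OF B, of z i] show "l z * v z i = l z * (\<Sum>b\<in>B. coord B z b * v b i)"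
      by auto
  qed
  also have "\<dots> = (\<Sum>z\<in>Z. \<Sum>b\<in>B. l z * coord B z b * v b i)"
    by (simp add: sum_distrib_left mult.assoc)
  also have "\<dots> = (\<Sum>b\<in>B. (\<Sum>z\<in>Z. l z * coord B z b) * v b i)"
    by (subst sum.swap) (simp add: sum_distrib_right)
  finally show ?thesis .
qed

lemma coord_functional:
  assumes B: "basis S indep B" and b: "b \<in> B"
  shows "gf2_functional v S (\<lambda>x. coord B x b)"
  unfolding gf2_functional_def
proof (intro allI impI)
  fix Z l assume Z: "Z \<subseteq> S" and rel: "\<forall>i. (\<Sum>z\<in>Z. l z * v z i) = 0"
  have "\<forall>i. (\<Sum>b\<in>B. (\<Sum>z\<in>Z. l z * coord B z b) * v b i) = 0"
    by (simp only: sum_in_coord[OF B Z, symmetric] rel simp_thms)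
  moreover have "gf2_lin_indep v B" using B by (simp add: basis_def indep_gf2_lin_indep)
  ultimately have "\<forall>b\<in>B. (\<Sum>z\<in>Z. l z * coord B z b) = 0"
    unfolding gf2_lin_indep_def by (elim allE[of _ "\<lambda>b. \<Sum>z\<in>Z. l z * coord B z b"]) blast
  with b show "(\<Sum>z\<in>Z. l z * coord B z b) = 0" by blast
qed

lemma dependent_if_coord_sums_vanish:
  assumes B: "basis S indep B" and Z: "Z \<subseteq> S" "Z \<noteq> {}"
    and sums: "\<And>b. b \<in> B \<Longrightarrow> (\<Sum>z\<in>Z. coord B z b) = 0"
  shows "\<not> indep Z"
proof
  assume "indep Z"
  have "(\<Sum>z\<in>Z. 1 * v z i) = 0" for i
    using sum_in_coord[OF B Z(1), of "\<lambda>_. 1" i] sums by simp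
  with indep_gf2_lin_indep[OF \<open>indep Z\<close>, unfolded gf2_lin_indep_def, THEN spec[of _ "\<lambda>_. 1"]]
  have "\<forall>z\<in>Z. (1::bit) = 0" by simp
  with Z(2) show False by auto
qed

lemma indep_insert_if_separated:
  assumes g: "gf2_functional v S g" and X: "indep X" and x: "x \<in> S"
    and gx: "g x \<noteq> 0" and gX: "\<And>z. z \<in> X \<Longrightarrow> g z = 0"
  shows "indep (insert x X)"
proof -
  have xX: "insert x X \<subseteq> S" using x indep_subset_ground[OF matroid X] by blast
  have fin: "finite X" using indep_subset_ground[OF matroid X] finite_ground[OF matroid]
    by (rule finite_subset)
  have x_notin: "x \<notin> X" using gx gX by blast
  have "gf2_lin_indep v (insert x X)"
    unfolding gf2_lin_indep_def
  proof (intro allI impI)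
    fix l assume rel: "\<forall>i. (\<Sum>z\<in>insert x X. l z * v z i) = 0"
    have "(\<Sum>z\<in>insert x X. l z * g z) = 0"
      using gf2_functionalD[OF g xX] rel by blast
    hence lx: "l x = 0" using fin x_notin gX gx by simp
    hence "\<forall>i. (\<Sum>z\<in>X. l z * v z i) = 0" using rel fin x_notin by simp
    hence "\<forall>z\<in>X. l z = 0" using indep_gf2_lin_indep[OF X] unfolding gf2_lin_indep_def by blast
    with lx show "\<forall>z\<in>insert x X. l z = 0" by simp
  qed
  with xX show ?thesis by (simp add: indep_iff)
qed

lemma functional_meets_basis:
  assumes g: "gf2_functional v S g" and x: "x \<in> S" "g x \<noteq> 0" and B: "basis S indep B"
  shows "\<exists>b\<in>B. g b \<noteq> 0"
proof (rule ccontr)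
  assume "\<not> ?thesis"
  hence "\<And>b. b \<in> B \<Longrightarrow> g b = 0" by blast
  moreover from this x have "x \<notin> B" by blast
  moreover have "indep B" using B by (simp add: basis_def)
  ultimately show False
    using indep_insert_if_separated[OF g _ x] basis_insert_dependent[OF matroid B] by blast
qed

definition fundamental_circuit :: "'a set \<Rightarrow> 'a \<Rightarrow> 'a set" where
  "fundamental_circuit B x = insert x {b\<in>B. coord B x b = 1}"

definition fundamental_cocircuit :: "'a set \<Rightarrow> 'a \<Rightarrow> 'a set" where
  "fundamental_cocircuit B b = {x\<in>S. coord B x b = 1}"

lemma circuit_fundamental_circuit:
  assumes B: "basis S indep B" and x: "x \<in> S" "x \<notin> B"
  shows "circuit S indep (fundamental_circuit B x)"
  unfolding fundamental_circuit_def
proof (rule circuitI[OF matroid])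
  let ?C = "insert x {b\<in>B. coord B x b = 1}"
  have indB: "indep B" and finB: "finite B" using B finite_basis by (auto simp: basis_def)
  show "?C \<subseteq> S" using x indep_subset_ground[OF matroid indB] by blast
  show "\<not> indep ?C"
  proof (rule dependent_if_coord_sums_vanish[OF B \<open>?C \<subseteq> S\<close>])
    fix b assume b: "b \<in> B"
    have "(\<Sum>z\<in>?C. coord B z b) = coord B x b + (\<Sum>z\<in>{b\<in>B. coord B x b = 1}. coord B z b)"
      using finB x(2) by simp
    also have "(\<Sum>z\<in>{b\<in>B. coord B x b = 1}. coord B z b) = (if coord B x b = 1 then 1 else 0)"
      using finB b by (simp add: sum.delta')
    finally show "(\<Sum>z\<in>?C. coord B z b) = 0" by simp
  qed simp
  fix y assume y: "y \<in> ?C"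
  show "indep (?C - {y})"
  proof (cases "y = x")
    case True
    hence "?C - {y} \<subseteq> B" by blast
    thus ?thesis by (rule indep_subset[OF matroid indB])
  next
    case False
    with y have "y \<in> B" "coord B x y = 1" by auto
    have "indep ({b\<in>B. coord B x b = 1} - {y})" by (rule indep_subset[OF matroid indB]) blast
    hence "indep (insert x ({b\<in>B. coord B x b = 1} - {y}))"
      using \<open>coord B x y = 1\<close> x(1)
      by (intro indep_insert_if_separated[OF coord_functional[OF B \<open>y \<in> B\<close>]]) auto
    moreover have "?C - {y} = insert x ({b\<in>B. coord B x b = 1} - {y})" using False by blast
    ultimately show ?thesis by simp
  qed
qed

lemma cut_fundamental_cocircuit:
  assumes B: "basis S indep B" and b: "b \<in> B"
  shows "cut S indep (fundamental_cocircuit B b)"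
  unfolding fundamental_cocircuit_def
proof (rule cutI[OF matroid])
  let ?K = "{x\<in>S. coord B x b = 1}"
  have indB: "indep B" and finB: "finite B" using B finite_basis by (auto simp: basis_def)
  have bS: "b \<in> S" using indep_subset_ground[OF matroid indB] b by blast
  note g = coord_functional[OF B b]
  show "?K \<subseteq> S" by blast
  show "\<forall>B'. basis S indep B' \<longrightarrow> ?K \<inter> B' \<noteq> {}"
  proof (intro allI impI)
    fix B' assume B': "basis S indep B'"
    obtain b' where "b' \<in> B'" "coord B b' b \<noteq> 0"
      using functional_meets_basis[OF g bS _ B'] b by auto
    moreover have "b' \<in> S" using \<open>b' \<in> B'\<close> B' indep_subset_ground[OF matroid] by (auto simp: basis_def)
    ultimately show "?K \<inter> B' \<noteq> {}" by auto
  qed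
  fix x assume x: "x \<in> ?K"
  have "x \<notin> B - {b}" using x by (auto split: if_splits)
  have "indep (B - {b})" by (rule indep_subset[OF matroid indB]) blast
  hence "indep (insert x (B - {b}))"
    using x by (intro indep_insert_if_separated[OF g]) auto
  moreover have "card (insert x (B - {b})) = card B"
    using \<open>x \<notin> B - {b}\<close> finB b card_Suc_Diff1[OF finB b] by simp
  ultimately have "basis S indep (insert x (B - {b}))"
    using B basis_iff_card[OF matroid] by simp
  moreover have "(?K - {x}) \<inter> insert x (B - {b}) = {}" by (auto split: if_splits)
  ultimately show "\<exists>B'. basis S indep B' \<and> (?K - {x}) \<inter> B' = {}" by blast
qed

text \<open>Evenness makes Y the support of the functional summing the B-coordinates over B \<inter> Y.\<close>
lemma meets_basis_if_even_on_fundamental_circuits: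
  assumes B: "basis S indep B" and Y: "Y \<subseteq> S" "Y \<noteq> {}"
    and even: "\<And>x. x \<in> S \<Longrightarrow> x \<notin> B \<Longrightarrow> (\<Sum>z\<in>Y. of_bool (z \<in> fundamental_circuit B x)) = (0::bit)"
    and B': "basis S indep B'"
  shows "Y \<inter> B' \<noteq> {}"
proof -
  have finY: "finite Y" using Y(1) finite_ground[OF matroid] by (rule finite_subset)
  define g where "g x = (\<Sum>b\<in>B \<inter> Y. coord B x b)" for x
  have g: "gf2_functional v S g"
    unfolding g_def by (rule gf2_functional_sum) (auto intro: coord_functional[OF B])
  have g_Y: "g x = of_bool (x \<in> Y)" if x: "x \<in> S" for x
  proof (cases "x \<in> B")
    case True
    thus ?thesis using finite_basis[OF B] by (simp add: g_def sum.delta')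
  next
    case False
    have "(\<Sum>z\<in>Y. of_bool (z \<in> fundamental_circuit B x)) =
        (\<Sum>z\<in>Y - B. of_bool (z \<in> fundamental_circuit B x)) + (\<Sum>z\<in>Y \<inter> B. of_bool (z \<in> fundamental_circuit B x))"
      using sum.Int_Diff[OF finY, of _ B] by (simp add: add.commute)
    also have "\<dots> = (\<Sum>z\<in>Y - B. of_bool (z = x)) + (\<Sum>z\<in>Y \<inter> B. of_bool (coord B x z = 1))"
      using False by (intro arg_cong2[where f = "(+)"] sum.cong) (auto simp: fundamental_circuit_def)
    also have "\<dots> = of_bool (x \<in> Y) + g x"
      using finY False by (simp add: g_def Int_commute sum.delta)
    finally show ?thesis using even[OF x False] by (simp add: bit_add_eq_0_iff)
  qed
  obtain y where "y \<in> Y" using Y(2) by blast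
  with Y(1) g_Y obtain b where "b \<in> B'" "g b \<noteq> 0"
    using functional_meets_basis[OF g _ _ B', of y] by auto
  moreover have "b \<in> S" using \<open>b \<in> B'\<close> B' indep_subset_ground[OF matroid] by (auto simp: basis_def)
  ultimately show ?thesis using g_Y by auto
qed

lemma unit_transversal_fundamental_cocircuits:
  assumes P: "partition_on S P" and no_rainbow: "\<not> (\<exists>C. circuit S indep C \<and> rainbow P C)"
    and t: "\<And>A. A \<in> P \<Longrightarrow> t A \<in> A" and inj: "inj_on t P" and T: "basis S indep (t ` P)"
  shows "unit_transversal P (\<lambda>x k. of_bool (x \<in> fundamental_cocircuit (t ` P) (t k))) t"
    (is "unit_transversal P ?c t")
proof
  have TS: "t ` P \<subseteq> S" using t partition_onD1[OF P] by blast
  show "finite P" using finite_elements[OF finite_ground[OF matroid] P] .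
  show "t A \<in> A" if "A \<in> P" for A using t that .
  show "?c (t A) k = (if k = A then 1 else 0)" if "A \<in> P" "k \<in> P" for A k
    using that inj TS by (auto simp: fundamental_cocircuit_def inj_on_eq_iff)
  show "transversals_independent P ?c"
    unfolding transversals_independent_def
  proof (intro allI impI)
    fix y J assume y: "\<forall>A\<in>P. y A \<in> A" and J: "J \<subseteq> P \<and> J \<noteq> {}"
    have yJ: "\<forall>A\<in>J. y A \<in> A" using y J by blast
    have YS: "y ` J \<subseteq> S" using yJ J partition_onD1[OF P] by blast
    have "indep (y ` J)"
      using rainbow_indep_if_no_rainbow_circuit[OF matroid no_rainbow YS]
        partition_on_transversal_rainbow[OF P _ yJ] J by blast
    have sums: "(\<Sum>z\<in>y ` J. coord (t ` P) z (t k)) = (\<Sum>A\<in>J. ?c (y A) k)" for k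
      using partition_on_transversal_inj[OF P _ yJ] J YS
      by (simp add: sum.reindex fundamental_cocircuit_def subset_iff cong: sum.cong)
    show "\<exists>k\<in>P. (\<Sum>A\<in>J. ?c (y A) k) \<noteq> 0"
    proof (rule ccontr)
      assume "\<not> ?thesis"
      with sums have "(\<Sum>z\<in>y ` J. coord (t ` P) z b) = 0" if "b \<in> t ` P" for b
        using that by auto
      with dependent_if_coord_sums_vanish[OF T YS] J \<open>indep (y ` J)\<close> show False by blast
    qed
  qed
qed

lemma unit_transversal_fundamental_circuits:
  assumes P: "partition_on S P" and no_rainbow: "\<not> (\<exists>K. cut S indep K \<and> rainbow P K)"
    and t: "\<And>A. A \<in> P \<Longrightarrow> t A \<in> A" and inj: "inj_on t P" and B: "basis S indep (S - t ` P)"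
  shows "unit_transversal P (\<lambda>x k. of_bool (x \<in> fundamental_circuit (S - t ` P) (t k))) t"
    (is "unit_transversal P ?c t")
proof
  show "finite P" using finite_elements[OF finite_ground[OF matroid] P] .
  show "t A \<in> A" if "A \<in> P" for A using t that .
  show "?c (t A) k = (if k = A then 1 else 0)" if "A \<in> P" "k \<in> P" for A k
    using that inj by (auto simp: fundamental_circuit_def inj_on_eq_iff)
  show "transversals_independent P ?c"
    unfolding transversals_independent_def
  proof (intro allI impI)
    fix y J assume y: "\<forall>A\<in>P. y A \<in> A" and J: "J \<subseteq> P \<and> J \<noteq> {}"
    have yJ: "\<forall>A\<in>J. y A \<in> A" using y J by blast
    have YS: "y ` J \<subseteq> S" using yJ J partition_onD1[OF P] by blast
    obtain B' where B': "basis S indep B'" "B' \<inter> y ` J = {}"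
      using rainbow_avoids_basis_if_no_rainbow_cut[OF matroid no_rainbow YS]
        partition_on_transversal_rainbow[OF P _ yJ] J by blast
    have sums: "(\<Sum>z\<in>y ` J. of_bool (z \<in> fundamental_circuit (S - t ` P) (t k))) = (\<Sum>A\<in>J. ?c (y A) k)"
      for k using partition_on_transversal_inj[OF P _ yJ] J by (simp add: sum.reindex)
    show "\<exists>k\<in>P. (\<Sum>A\<in>J. ?c (y A) k) \<noteq> 0"
    proof (rule ccontr)
      assume "\<not> ?thesis"
      hence "(\<Sum>z\<in>y ` J. of_bool (z \<in> fundamental_circuit (S - t ` P) x)) = (0::bit)"
        if "x \<in> S" "x \<notin> S - t ` P" for x
        using that sums by auto
      with meets_basis_if_even_on_fundamental_circuits[OF B YS _ _ B'(1)] B'(2) J show False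
        by blast
    qed
  qed
qed

lemma cut_class_if_no_rainbow_circuit:
  assumes P: "partition_on S P" and "S \<noteq> {}" and card_P: "card P = matroid_rank S indep"
    and no_rainbow: "\<not> (\<exists>C. circuit S indep C \<and> rainbow P C)"
  shows "\<exists>A\<in>P. cut S indep A"
proof -
  obtain t where t: "\<And>A. A \<in> P \<Longrightarrow> t A \<in> A" and inj: "inj_on t P"
    and TS: "t ` P \<subseteq> S" and rainbow_T: "rainbow P (t ` P)"
    by (rule partition_on_transversal[OF P]) blast
  have T: "basis S indep (t ` P)"
    using rainbow_indep_if_no_rainbow_circuit[OF matroid no_rainbow TS rainbow_T]
      card_image[OF inj] card_P basis_iff_card[OF matroid] by simp
  have "\<Union>P = S" "P \<noteq> {}" using partition_onD1[OF P] \<open>S \<noteq> {}\<close> by auto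
  then obtain i where i: "i \<in> P"
    and class_i: "\<forall>x\<in>S. x \<in> fundamental_cocircuit (t ` P) (t i) \<longleftrightarrow> x \<in> i"
    using private_class_exists[OF unit_transversal_fundamental_cocircuits[OF P no_rainbow t inj T]]
    by auto
  moreover have "fundamental_cocircuit (t ` P) (t i) \<subseteq> S" "i \<subseteq> S"
    using i \<open>\<Union>P = S\<close> by (auto simp: fundamental_cocircuit_def)
  ultimately have "i = fundamental_cocircuit (t ` P) (t i)" by blast
  moreover have "cut S indep (fundamental_cocircuit (t ` P) (t i))"
    using i by (intro cut_fundamental_cocircuit[OF T]) auto
  ultimately show ?thesis using i by auto
qed

lemma circuit_class_if_no_rainbow_cut:
  assumes P: "partition_on S P" and "S \<noteq> {}" and card_P: "card P = card S - matroid_rank S indep"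
    and no_rainbow: "\<not> (\<exists>K. cut S indep K \<and> rainbow P K)"
  shows "\<exists>A\<in>P. circuit S indep A"
proof -
  obtain t where t: "\<And>A. A \<in> P \<Longrightarrow> t A \<in> A" and inj: "inj_on t P"
    and TS: "t ` P \<subseteq> S" and rainbow_T: "rainbow P (t ` P)"
    by (rule partition_on_transversal[OF P]) blast
  obtain B where "basis S indep B" "B \<inter> t ` P = {}"
    using rainbow_avoids_basis_if_no_rainbow_cut[OF matroid no_rainbow TS rainbow_T] by blast
  with TS card_P card_image[OF inj] have B: "basis S indep (S - t ` P)"
    using basis_disjoint_eq_complement[OF matroid] by metis
  have "\<Union>P = S" "P \<noteq> {}" using partition_onD1[OF P] \<open>S \<noteq> {}\<close> by auto
  then obtain i where i: "i \<in> P"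
    and class_i: "\<forall>x\<in>S. x \<in> fundamental_circuit (S - t ` P) (t i) \<longleftrightarrow> x \<in> i"
    using private_class_exists[OF unit_transversal_fundamental_circuits[OF P no_rainbow t inj B]]
    by auto
  moreover have "fundamental_circuit (S - t ` P) (t i) \<subseteq> S" "i \<subseteq> S"
    using TS i \<open>\<Union>P = S\<close> by (auto simp: fundamental_circuit_def)
  ultimately have "i = fundamental_circuit (S - t ` P) (t i)" by blast
  moreover have "circuit S indep (fundamental_circuit (S - t ` P) (t i))"
    using TS i by (intro circuit_fundamental_circuit[OF B]) auto
  ultimately show ?thesis using i by auto
qed

end

theorem corollary2:
  fixes S :: "'a set" and indep :: "'a set \<Rightarrow> bool"
  assumes "finite S" and "S \<noteq> {}"
    and "matroid S indep" and "binary_matroid S indep" and "loopless S indep"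
  shows "(\<forall>P. partition_on S P \<and> card P = matroid_rank S indep
              \<and> \<not> (\<exists>C. circuit S indep C \<and> rainbow P C)
            \<longrightarrow> (\<exists>A\<in>P. cut S indep A))
       \<and> (\<forall>P. partition_on S P \<and> card P = card S - matroid_rank S indep
              \<and> \<not> (\<exists>K. cut S indep K \<and> rainbow P K)
            \<longrightarrow> (\<exists>A\<in>P. circuit S indep A))"
proof -
  obtain v :: "'a \<Rightarrow> nat \<Rightarrow> bit" where "\<forall>X. X \<subseteq> S \<longrightarrow> (indep X \<longleftrightarrow> gf2_lin_indep v X)"
    using assms(4) unfolding binary_matroid_def by blast
  then interpret gf2_represented_matroid S indep v
    using assms(3) by unfold_locales auto
  show ?thesis
    using cut_class_if_no_rainbow_circuit circuit_class_if_no_rainbow_cut assms(2) by blast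
qed

end
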